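(* Let $P$ be a finite partially ordered set having an infimum operation $\wedge$ and a greatest element $\top$, put $P^\times=P\setminus\{\top\}$, and let $U\colon P\to\mathbf{Ab}$ be a presheaf admitting an extender $\lambda$. Then the homomorphism $U(\top)\to\lim_{p\in P^\times}U(p)$, $u\mapsto(u|_p)_{p\in P^\times}$, is surjective.
   Context: A presheaf $U\colon P\to\mathbf{Ab}$ is a contravariant functor: abelian groups $U(p)$ and restriction homomorphisms $u\mapsto u|_q\colon U(p)\to U(q)$ for $p\ge q$, functorial. $\lim_{p\in P^\times}U(p)$ is the group of families $(u_p)_{p\in P^\times}$, $u_p\in U(p)$, with $u_p|_q=u_q$ whenever $p\ge q$. An extender for $U$ is a collection of homomorphisms $\lambda^q_p\colon U(q)\to U(p)$, for $p,q\in P$ with $p\ge q$, such that for all $p,q\in P$ and $x\in U(q)$: $\lambda^q_p(x)|_q=x$ whenever $p\ge q$, and $\lambda^q_\top(x)|_p=\lambda^{p\wedge q}_p(x|_{p\wedge q})$. *)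

theory Defs
  imports "HOL-Algebra.Group"
begin

definition ab_presheaf ::
  "('p::order \<Rightarrow> ('a,'b) monoid_scheme) \<Rightarrow> ('p \<Rightarrow> 'p \<Rightarrow> 'a \<Rightarrow> 'a) \<Rightarrow> bool" where
  "ab_presheaf U res \<longleftrightarrow>
     (\<forall>p. comm_group (U p)) \<and>
     (\<forall>p q. q \<le> p \<longrightarrow> res p q \<in> hom (U p) (U q)) \<and>
     (\<forall>p. \<forall>x\<in>carrier (U p). res p p x = x) \<and>
     (\<forall>p q s. s \<le> q \<longrightarrow> q \<le> p \<longrightarrow>
        (\<forall>x\<in>carrier (U p). res q s (res p q x) = res p s x))"

text \<open>Extender: lam q p is the homomorphism lambda^q_p : U q \<rightarrow> U p for q \<le> p.\<close>
definition is_extender ::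
  "('p::{semilattice_inf, order_top} \<Rightarrow> ('a,'b) monoid_scheme) \<Rightarrow> ('p \<Rightarrow> 'p \<Rightarrow> 'a \<Rightarrow> 'a)
     \<Rightarrow> ('p \<Rightarrow> 'p \<Rightarrow> 'a \<Rightarrow> 'a) \<Rightarrow> bool" where
  "is_extender U res lam \<longleftrightarrow>
     (\<forall>p q. q \<le> p \<longrightarrow> lam q p \<in> hom (U q) (U p)) \<and>
     (\<forall>p q. \<forall>x\<in>carrier (U q).
        (q \<le> p \<longrightarrow> res p q (lam q p x) = x) \<and>
        res Orderings.top p (lam q Orderings.top x) = lam (Lattices.inf p q) p (res q (Lattices.inf p q) x))"

text \<open>Elements of the limit over P minus top: compatible families (values at top are irrelevant).\<close>
definition lim_family ::
  "('p::order_top \<Rightarrow> ('a,'b) monoid_scheme) \<Rightarrow> ('p \<Rightarrow> 'p \<Rightarrow> 'a \<Rightarrow> 'a) \<Rightarrow> ('p \<Rightarrow> 'a) \<Rightarrow> bool" where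
  "lim_family U res u \<longleftrightarrow>
     (\<forall>p. p \<noteq> Orderings.top \<longrightarrow> u p \<in> carrier (U p)) \<and>
     (\<forall>p q. p \<noteq> Orderings.top \<longrightarrow> q \<noteq> Orderings.top \<longrightarrow> q \<le> p \<longrightarrow> res p q (u p) = u q)"

end

theory Submission
  imports Defs
begin

text \<open>Build the preimage along down-closed subsets of \<open>P\<^sup>\<times>\<close>, one element at a time.
  If \<open>x\<close> already restricts to \<open>u\<close> strictly below a maximal new element \<open>q\<close>, replace it by
  \<open>x + \<lambda>\<^sup>q\<^sub>\<top>(u\<^sub>q - x|\<^sub>q)\<close>. By the second extender axiom the correction restricts on \<open>p\<close> to
  \<open>\<lambda>\<^sup>p\<^sup>\<and>\<^sup>q\<^sub>p\<close> applied to the restriction of \<open>u\<^sub>q - x|\<^sub>q\<close> to \<open>p \<and> q\<close>, which vanishes whenever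
  \<open>p \<and> q < q\<close>, while on \<open>q\<close> itself it is exactly \<open>u\<^sub>q - x|\<^sub>q\<close>.\<close>

lemma lim_family_in_carrier:
  "lim_family U res u \<Longrightarrow> p \<noteq> Orderings.top \<Longrightarrow> u p \<in> carrier (U p)"
  unfolding lim_family_def by blast

lemma lim_family_res:
  "lim_family U res u \<Longrightarrow> q \<le> p \<Longrightarrow> p \<noteq> Orderings.top \<Longrightarrow> res p q (u p) = u q"
  unfolding lim_family_def by (metis top.extremum_uniqueI)

context
  fixes U :: "'p::{semilattice_inf, order_top} \<Rightarrow> ('a,'b) monoid_scheme"
    and res :: "'p \<Rightarrow> 'p \<Rightarrow> 'a \<Rightarrow> 'a"
    and lam :: "'p \<Rightarrow> 'p \<Rightarrow> 'a \<Rightarrow> 'a"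
  assumes presheaf: "ab_presheaf U res"
    and extender: "is_extender U res lam"
begin

lemma comm_group_sections: "comm_group (U p)"
  using presheaf by (simp add: ab_presheaf_def)

lemma group_sections: "group (U p)"
  using comm_group_sections comm_group.axioms(2) by blast

lemma group_hom_res: "q \<le> p \<Longrightarrow> group_hom (U p) (U q) (res p q)"
  using presheaf group_sections unfolding ab_presheaf_def
  by (simp add: group_hom_def group_hom_axioms_def)

lemma res_refl: "x \<in> carrier (U p) \<Longrightarrow> res p p x = x"
  using presheaf by (simp add: ab_presheaf_def)

lemma res_res: "s \<le> q \<Longrightarrow> q \<le> p \<Longrightarrow> x \<in> carrier (U p) \<Longrightarrow> res q s (res p q x) = res p s x"
  using presheaf by (simp add: ab_presheaf_def)

lemma group_hom_lam: "q \<le> p \<Longrightarrow> group_hom (U q) (U p) (lam q p)"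
  using extender group_sections unfolding is_extender_def
  by (simp add: group_hom_def group_hom_axioms_def)

lemma res_lam: "x \<in> carrier (U q) \<Longrightarrow> q \<le> p \<Longrightarrow> res p q (lam q p x) = x"
  using extender unfolding is_extender_def by blast

lemma res_top_lam:
  "x \<in> carrier (U q) \<Longrightarrow>
    res Orderings.top p (lam q Orderings.top x) = lam (inf p q) p (res q (inf p q) x)"
  using extender unfolding is_extender_def by blast

lemma res_top_lam_self: "x \<in> carrier (U q) \<Longrightarrow> res Orderings.top q (lam q Orderings.top x) = x"
proof -
  assume x: "x \<in> carrier (U q)"
  have "lam q q x \<in> carrier (U q)"
    using group_hom.hom_closed[OF group_hom_lam x] by simp
  then have "lam q q x = x"
    using res_lam[OF x order_refl] res_refl by simp
  then show ?thesis
    using res_top_lam[OF x, of q] res_refl[OF x] by simp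
qed

lemma res_top_lam_eq_one:
  assumes "x \<in> carrier (U q)" and "res q (inf p q) x = \<one>\<^bsub>U (inf p q)\<^esub>"
  shows "res Orderings.top p (lam q Orderings.top x) = \<one>\<^bsub>U p\<^esub>"
  using res_top_lam[OF assms(1), of p] assms(2) group_hom.hom_one[OF group_hom_lam] by simp

lemma extend_section_at:
  assumes u: "lim_family U res u"
    and x: "x \<in> carrier (U Orderings.top)"
    and q: "q \<noteq> Orderings.top"
    and below_q: "\<And>r. r < q \<Longrightarrow> res Orderings.top r x = u r"
  obtains x' where "x' \<in> carrier (U Orderings.top)" and "res Orderings.top q x' = u q"
    and "\<And>p. \<not> q \<le> p \<Longrightarrow> res Orderings.top p x' = res Orderings.top p x"
proof -
  interpret Utop: group "U Orderings.top" by (rule group_sections)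
  interpret Uq: comm_group "U q" by (rule comm_group_sections)
  have uq: "u q \<in> carrier (U q)" using lim_family_in_carrier[OF u q] .
  have xq: "res Orderings.top q x \<in> carrier (U q)"
    using group_hom.hom_closed[OF group_hom_res x] by simp
  define d where "d = u q \<otimes>\<^bsub>U q\<^esub> inv\<^bsub>U q\<^esub> res Orderings.top q x"
  have d: "d \<in> carrier (U q)" unfolding d_def using uq xq by simp
  have lam_d: "lam q Orderings.top d \<in> carrier (U Orderings.top)"
    using group_hom.hom_closed[OF group_hom_lam d] by simp
  define x' where "x' = x \<otimes>\<^bsub>U Orderings.top\<^esub> lam q Orderings.top d"
  have res_x': "res Orderings.top p x'
      = res Orderings.top p x \<otimes>\<^bsub>U p\<^esub> res Orderings.top p (lam q Orderings.top d)" for p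
    unfolding x'_def using group_hom.hom_mult[OF group_hom_res x lam_d] by simp
  show ?thesis
  proof
    show "x' \<in> carrier (U Orderings.top)"
      unfolding x'_def using x lam_d by (rule Utop.m_closed)
    have "res Orderings.top q x' = res Orderings.top q x \<otimes>\<^bsub>U q\<^esub> d"
      unfolding res_x' res_top_lam_self[OF d] ..
    also have "\<dots> = u q \<otimes>\<^bsub>U q\<^esub> (res Orderings.top q x \<otimes>\<^bsub>U q\<^esub> inv\<^bsub>U q\<^esub> res Orderings.top q x)"
      unfolding d_def using Uq.m_lcomm[OF xq uq Uq.inv_closed[OF xq]] .
    also have "\<dots> = u q" using uq xq by simp
    finally show "res Orderings.top q x' = u q" .
  next
    fix p assume "\<not> q \<le> p"
    then have "inf p q \<noteq> q" by (metis inf.cobounded1)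
    then have r: "inf p q < q" by (simp add: less_le)
    interpret Ur: group "U (inf p q)" by (rule group_sections)
    interpret res_qr: group_hom "U q" "U (inf p q)" "res q (inf p q)"
      using group_hom_res r by simp
    have "res q (inf p q) (res Orderings.top q x) = u (inf p q)"
      using res_res[OF less_imp_le[OF r] top_greatest x] below_q[OF r] by simp
    moreover have "res q (inf p q) (u q) = u (inf p q)"
      using lim_family_res[OF u less_imp_le[OF r] q] .
    ultimately have "res q (inf p q) d = u (inf p q) \<otimes>\<^bsub>U (inf p q)\<^esub> inv\<^bsub>U (inf p q)\<^esub> u (inf p q)"
      unfolding d_def using uq xq by simp
    also have "\<dots> = \<one>\<^bsub>U (inf p q)\<^esub>"
      using lim_family_in_carrier[OF u, of "inf p q"] r q by fastforce
    finally have "res Orderings.top p (lam q Orderings.top d) = \<one>\<^bsub>U p\<^esub>"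
      by (rule res_top_lam_eq_one[OF d])
    then show "res Orderings.top p x' = res Orderings.top p x"
      unfolding res_x' using group_hom.hom_closed[OF group_hom_res x]
      by (simp add: monoid.r_one[OF group.is_monoid[OF group_sections]])
  qed
qed

lemma section_on_down_closed:
  assumes u: "lim_family U res u"
  shows "finite D \<Longrightarrow> Orderings.top \<notin> D \<Longrightarrow> (\<And>p r. p \<in> D \<Longrightarrow> r \<le> p \<Longrightarrow> r \<in> D) \<Longrightarrow>
    \<exists>x\<in>carrier (U Orderings.top). \<forall>p\<in>D. res Orderings.top p x = u p"
proof (induction D rule: finite_psubset_induct)
  case (psubset D)
  show ?case
  proof (cases "D = {}")
    case True
    then show ?thesis using group.is_monoid[OF group_sections] monoid.one_closed by blast
  next
    case False
    obtain q where qD: "q \<in> D" and q_max: "\<And>p. p \<in> D \<Longrightarrow> q \<le> p \<Longrightarrow> q = p"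
      using finite_has_maximal[OF psubset.hyps False] by blast
    have q: "q \<noteq> Orderings.top" using qD psubset.prems(1) by blast
    have smaller: "D - {q} \<subset> D" using qD by blast
    have top_notin: "Orderings.top \<notin> D - {q}" using psubset.prems(1) by simp
    have down_closed: "r \<in> D - {q}" if p: "p \<in> D - {q}" and rp: "r \<le> p" for p r
    proof -
      have "r \<in> D" using p rp psubset.prems(2) by blast
      moreover have "r \<noteq> q"
      proof
        assume "r = q"
        then have "q = p" using q_max p rp by simp
        then show False using p by simp
      qed
      ultimately show ?thesis by simp
    qed
    obtain x where x: "x \<in> carrier (U Orderings.top)"
      and on_D: "\<forall>p\<in>D - {q}. res Orderings.top p x = u p"
      using psubset.IH[OF smaller top_notin] down_closed by blast
    have below_q: "res Orderings.top r x = u r" if "r < q" for r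
      using on_D psubset.prems(2)[OF qD] that by (simp add: less_le)
    obtain x' where x': "x' \<in> carrier (U Orderings.top)" and at_q: "res Orderings.top q x' = u q"
      and off_q: "\<And>p. \<not> q \<le> p \<Longrightarrow> res Orderings.top p x' = res Orderings.top p x"
      using extend_section_at[OF u x q below_q] by metis
    have "res Orderings.top p x' = u p" if p: "p \<in> D" for p
    proof (cases "p = q")
      case True
      then show ?thesis using at_q by simp
    next
      case False
      then have "\<not> q \<le> p" using q_max p by blast
      then show ?thesis using off_q on_D p False by simp
    qed
    then show ?thesis using x' by blast
  qed
qed

end

theorem lemma9p2:
  fixes U :: "'p::{finite, semilattice_inf, order_top} \<Rightarrow> ('a,'b) monoid_scheme"
    and res :: "'p \<Rightarrow> 'p \<Rightarrow> 'a \<Rightarrow> 'a"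
    and lam :: "'p \<Rightarrow> 'p \<Rightarrow> 'a \<Rightarrow> 'a"
  assumes "ab_presheaf U res"
    and "is_extender U res lam"
    and "lim_family U res u"
  shows "\<exists>x\<in>carrier (U Orderings.top). \<forall>p. p \<noteq> Orderings.top \<longrightarrow> res Orderings.top p x = u p"
proof -
  have down_closed: "r \<noteq> Orderings.top" if "p \<noteq> Orderings.top" and "r \<le> p" for p r :: 'p
    using that top.extremum_uniqueI by blast
  have "\<exists>x\<in>carrier (U Orderings.top). \<forall>p\<in>- {Orderings.top}. res Orderings.top p x = u p"
    using section_on_down_closed[OF assms, of "- {Orderings.top}"] down_closed by simp
  then show ?thesis by blast
qed

end
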